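(* Let $\mathcal W$ be a discrete memoryless channel from a finite set $\mathcal X$ to a finite set $\mathcal Y$ and $\alpha\in(0,1)\cup(1,\infty)$. Then $$U_\alpha(\mathcal W)=\min_{Q_Y\in\mathcal P(\mathcal Y)}\max_{x\in\mathcal X}D_\alpha\big(Q_Y\|\mathcal W(\cdot|x)\big).$$
   Context: For $\alpha\in(0,1)\cup(1,\infty)$, $D_\alpha(P\|Q)=\frac1{\alpha-1}\log\sum_{x:P(x)>0}P(x)^\alpha Q(x)^{1-\alpha}$ ($+\infty$ if $\alpha>1$ and $P\not\ll Q$). The Rényi $\alpha$-umlaut information of the channel is $U_\alpha(\mathcal W)=\max_{P_X\in\mathcal P(\mathcal X)}\min_{Q_Y\in\mathcal P(\mathcal Y)}D_\alpha(P_X\times Q_Y\|P_{XY})$ with $P_{XY}(x,y)=P_X(x)\mathcal W(y|x)$. *)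

theory Defs
  imports "HOL-Analysis.Analysis"
begin

definition is_pd :: "('a::finite \<Rightarrow> real) \<Rightarrow> bool" where
  "is_pd P \<longleftrightarrow> (\<forall>x. 0 \<le> P x) \<and> (\<Sum>x\<in>UNIV. P x) = 1"

text \<open>Discrete memoryless channel: a stochastic matrix W x y = W(y|x).\<close>
definition is_channel :: "('x::finite \<Rightarrow> 'y::finite \<Rightarrow> real) \<Rightarrow> bool" where
  "is_channel W \<longleftrightarrow> (\<forall>x. is_pd (W x))"

text \<open>Renyi divergence (natural logarithm), with value +infinity when P is not
  absolutely continuous w.r.t. Q for alpha > 1, and when the sum vanishes
  (log 0 = -infinity divided by alpha - 1 < 0) for alpha < 1.\<close>
definition renyi_div :: "real \<Rightarrow> ('a::finite \<Rightarrow> real) \<Rightarrow> ('a \<Rightarrow> real) \<Rightarrow> ereal" where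
  "renyi_div \<alpha> P Q =
     (let S = (\<Sum>x\<in>{x. P x > 0}. P x powr \<alpha> * Q x powr (1 - \<alpha>)) in
      if \<alpha> > 1 \<and> \<not> (\<forall>x. P x > 0 \<longrightarrow> Q x > 0) then \<infinity>
      else if S = 0 then \<infinity>
      else ereal (ln S / (\<alpha> - 1)))"

definition umlaut_info :: "real \<Rightarrow> ('x::finite \<Rightarrow> 'y::finite \<Rightarrow> real) \<Rightarrow> ereal" where
  "umlaut_info \<alpha> W =
     (SUP P\<in>{P. is_pd P}. INF Q\<in>{Q. is_pd Q}.
        renyi_div \<alpha> (\<lambda>(x, y). P x * Q y) (\<lambda>(x, y). P x * W x y))"

end

theory Submission
  imports Defs
begin

text \<open>Write \<open>G\<^sub>x(Q) = \<Sum>\<^sub>y Q(y)\<^sup>\<alpha> W(y|x)\<^sup>1\<^sup>-\<^sup>\<alpha>\<close>. Up to the conventions for \<open>\<infinity>\<close>,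
  \<open>D\<^sub>\<alpha>(Q \<parallel> W(\<cdot>|x)) = ln G\<^sub>x(Q) / (\<alpha> - 1)\<close> and the divergence in the definition of \<open>U\<^sub>\<alpha>\<close> is
  \<open>ln (\<Sum>\<^sub>x P(x) G\<^sub>x(Q)) / (\<alpha> - 1)\<close>. An average over \<open>P\<close> lies between \<open>min\<^sub>x\<close> and \<open>max\<^sub>x\<close>,
  which gives \<open>U\<^sub>\<alpha> \<le> max\<^sub>x D\<^sub>\<alpha>(Q \<parallel> W(\<cdot>|x))\<close> for every \<open>Q\<close>.

  For the converse, \<open>G\<^sub>x\<close> is convex in \<open>Q\<close> for \<open>\<alpha> > 1\<close> and concave for \<open>\<alpha> < 1\<close>. Compactness of the
  simplex yields a \<open>Q\<close> optimising \<open>max\<^sub>x G\<^sub>x\<close> (resp. \<open>min\<^sub>x G\<^sub>x\<close>), and a separating hyperplane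
  (a finite minimax argument) yields an input distribution \<open>P\<close> whose average \<open>\<Sum>\<^sub>x P(x) G\<^sub>x\<close>
  is on the far side of that optimal value for every \<open>Q\<close>. For \<open>\<alpha> > 1\<close> only the \<open>Q\<close> supported on
  outputs reachable from every input have finite divergence; the optimisation is restricted to them
  and \<open>P\<close> is perturbed towards the uniform distribution so that all other \<open>Q\<close> give \<open>\<infinity>\<close>.\<close>

lemma convex_on_powr_nonneg:
  assumes "1 \<le> \<alpha>"
  shows "convex_on {0..} (\<lambda>x::real. x powr \<alpha>)"
proof
  fix t x y :: real assume t: "0 < t" "t < 1" and xy: "x \<in> {0..}" "y \<in> {0..}"
  have scale: "(s * z) powr \<alpha> \<le> s * z powr \<alpha>" if "0 \<le> s" "s \<le> 1" "0 \<le> z" for s z :: real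
    using that assms powr_le_one_le[of s \<alpha>]
    by (cases "s = 0") (auto simp: powr_mult intro: mult_right_mono)
  show "((1 - t) *\<^sub>R x + t *\<^sub>R y) powr \<alpha> \<le> (1 - t) * x powr \<alpha> + t * y powr \<alpha>"
  proof (cases "x = 0 \<or> y = 0")
    case True
    then show ?thesis using scale t xy by auto
  next
    case False
    then show ?thesis
      using convex_onD[OF powr_convex[OF assms], of t x y] t xy by auto
  qed
qed simp

lemma concave_on_powr_nonneg:
  assumes "0 < \<alpha>" "\<alpha> \<le> 1"
  shows "concave_on {0..} (\<lambda>x::real. x powr \<alpha>)"
proof -
  have pos: "concave_on {0<..} (\<lambda>x::real. x powr \<alpha>)"
  proof (rule f''_le0_imp_concave[where f'="\<lambda>x. \<alpha> * x powr (\<alpha> - 1)"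
        and f''="\<lambda>x. \<alpha> * ((\<alpha> - 1) * x powr (\<alpha> - 2))"])
    fix x :: real assume "x \<in> {0<..}"
    then show "\<alpha> * ((\<alpha> - 1) * x powr (\<alpha> - 2)) \<le> 0"
      using assms by (intro mult_nonneg_nonpos mult_nonpos_nonneg) auto
  qed (auto intro!: derivative_eq_intros simp: algebra_simps)
  have scale: "s * z powr \<alpha> \<le> (s * z) powr \<alpha>" if "0 \<le> s" "s \<le> 1" "0 \<le> z" for s z :: real
    using that assms powr_mono'[of \<alpha> 1 s]
    by (cases "s = 0") (auto simp: powr_mult intro: mult_right_mono)
  show ?thesis
    unfolding concave_on_def
  proof
    fix t x y :: real assume t: "0 < t" "t < 1" and xy: "x \<in> {0..}" "y \<in> {0..}"
    show "- (((1 - t) *\<^sub>R x + t *\<^sub>R y) powr \<alpha>) \<le> (1 - t) * - (x powr \<alpha>) + t * - (y powr \<alpha>)"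
    proof (cases "x = 0 \<or> y = 0")
      case True
      then show ?thesis using scale[of t y] scale[of "1 - t" x] t xy by auto
    next
      case False
      then show ?thesis
        using concave_onD[OF pos, of t x y] t xy by auto
    qed
  qed simp
qed

lemma exists_pd_nonneg_on_upward_closed:
  fixes S :: "(real^'n) set"
  assumes "convex S" "0 \<notin> S" "S \<noteq> {}"
    and upward: "\<And>z d. z \<in> S \<Longrightarrow> (\<forall>i. 0 \<le> d$i) \<Longrightarrow> z + d \<in> S"
  shows "\<exists>P. is_pd P \<and> (\<forall>z\<in>S. 0 \<le> (\<Sum>i\<in>UNIV. P i * z$i))"
proof -
  obtain a :: "real^'n" where "a \<noteq> 0" and a: "\<And>z. z \<in> S \<Longrightarrow> 0 \<le> a \<bullet> z"
    using separating_hyperplane_set_0[OF assms(1,2)] by blast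
  have a_nonneg: "0 \<le> a$i" for i
  proof (rule ccontr)
    assume neg: "\<not> 0 \<le> a$i"
    obtain z where "z \<in> S" using assms(3) by blast
    define s where "s = (\<bar>a \<bullet> z\<bar> + 1) / - a$i"
    have "0 \<le> s" unfolding s_def using neg by (intro divide_nonneg_pos) auto
    then have "z + axis i s \<in> S" using upward[OF \<open>z \<in> S\<close>] by (simp add: axis_def)
    then have "0 \<le> a \<bullet> (z + axis i s)" by (rule a)
    then have "0 \<le> a \<bullet> z + a$i * s" by (simp add: inner_add_right inner_axis)
    moreover have "a$i * s = - (\<bar>a \<bullet> z\<bar> + 1)" using neg unfolding s_def by simp
    ultimately show False by linarith
  qed
  obtain j where "a$j \<noteq> 0" using \<open>a \<noteq> 0\<close> by (metis vec_eq_iff zero_index)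
  have "0 < a$j" using \<open>a$j \<noteq> 0\<close> a_nonneg[of j] by simp
  also have "a$j \<le> (\<Sum>i\<in>UNIV. a$i)" by (rule member_le_sum) (use a_nonneg in auto)
  finally have sum_pos: "0 < (\<Sum>i\<in>UNIV. a$i)" .
  define P where "P i = a$i / (\<Sum>i\<in>UNIV. a$i)" for i
  have "is_pd P"
    unfolding is_pd_def P_def using a_nonneg sum_pos by (simp add: sum_divide_distrib[symmetric])
  moreover have "0 \<le> (\<Sum>i\<in>UNIV. P i * z$i)" if "z \<in> S" for z
  proof -
    have "(\<Sum>i\<in>UNIV. P i * z$i) = (a \<bullet> z) / (\<Sum>i\<in>UNIV. a$i)"
      unfolding P_def inner_vec_def by (simp add: sum_divide_distrib)
    then show ?thesis using a[OF that] sum_pos by simp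
  qed
  ultimately show ?thesis by blast
qed

lemma convex_strictly_dominating_set:
  fixes k :: "'x::finite \<Rightarrow> ('y \<Rightarrow> real) \<Rightarrow> real"
  assumes mixture: "\<And>Q1 Q2 t. Q1 \<in> D \<Longrightarrow> Q2 \<in> D \<Longrightarrow> 0 \<le> t \<Longrightarrow> t \<le> 1 \<Longrightarrow>
      (\<lambda>y. (1 - t) * Q1 y + t * Q2 y) \<in> D"
    and convex: "\<And>x Q1 Q2 t. Q1 \<in> D \<Longrightarrow> Q2 \<in> D \<Longrightarrow> 0 \<le> t \<Longrightarrow> t \<le> 1 \<Longrightarrow>
      k x (\<lambda>y. (1 - t) * Q1 y + t * Q2 y) \<le> (1 - t) * k x Q1 + t * k x Q2"
  shows "convex {z::real^'x. \<exists>Q\<in>D. \<exists>e>0. \<forall>x. k x Q + e \<le> z$x}"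
proof (rule convexI)
  fix z1 z2 :: "real^'x" and u w :: real
  assume "z1 \<in> {z. \<exists>Q\<in>D. \<exists>e>0. \<forall>x. k x Q + e \<le> z$x}" "z2 \<in> {z. \<exists>Q\<in>D. \<exists>e>0. \<forall>x. k x Q + e \<le> z$x}"
    and "0 \<le> u" "0 \<le> w" "u + w = 1"
  then obtain Q1 e1 Q2 e2 where Q1: "Q1 \<in> D" "e1 > 0" "\<And>x. k x Q1 + e1 \<le> z1$x"
    and Q2: "Q2 \<in> D" "e2 > 0" "\<And>x. k x Q2 + e2 \<le> z2$x" and w: "w = 1 - u" "0 \<le> u" "u \<le> 1"
    by auto
  define Q where "Q y = (1 - w) * Q1 y + w * Q2 y" for y
  have "Q \<in> D" unfolding Q_def using mixture[OF Q1(1) Q2(1), of w] w by simp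
  moreover have "0 < u * e1 + w * e2"
    using Q1 Q2 w by (cases "u = 0") (auto intro: add_pos_nonneg)
  moreover have "k x Q + (u * e1 + w * e2) \<le> (u *\<^sub>R z1 + w *\<^sub>R z2)$x" for x
  proof -
    have "k x Q \<le> u * k x Q1 + w * k x Q2"
      unfolding Q_def using convex[OF Q1(1) Q2(1), of w x] w by simp
    moreover have "u * (k x Q1 + e1) \<le> u * z1$x" "w * (k x Q2 + e2) \<le> w * z2$x"
      using Q1(3) Q2(3) w by (simp_all add: mult_left_mono)
    ultimately show ?thesis by (simp add: w(1) algebra_simps)
  qed
  ultimately show "u *\<^sub>R z1 + w *\<^sub>R z2 \<in> {z. \<exists>Q\<in>D. \<exists>e>0. \<forall>x. k x Q + e \<le> z$x}" by blast
qed

text \<open>The points strictly dominating some \<open>(k x Q - v)\<^sub>x\<close> form a convex set avoiding \<open>0\<close>; a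
  hyperplane separating it from \<open>0\<close> has a nonnegative normal, which is the mixture \<open>P\<close>.\<close>

lemma exists_mixture_ge_of_max_ge:
  fixes k :: "'x::finite \<Rightarrow> ('y \<Rightarrow> real) \<Rightarrow> real"
  assumes "D \<noteq> {}"
    and mixture: "\<And>Q1 Q2 t. Q1 \<in> D \<Longrightarrow> Q2 \<in> D \<Longrightarrow> 0 \<le> t \<Longrightarrow> t \<le> 1 \<Longrightarrow>
      (\<lambda>y. (1 - t) * Q1 y + t * Q2 y) \<in> D"
    and convex: "\<And>x Q1 Q2 t. Q1 \<in> D \<Longrightarrow> Q2 \<in> D \<Longrightarrow> 0 \<le> t \<Longrightarrow> t \<le> 1 \<Longrightarrow>
      k x (\<lambda>y. (1 - t) * Q1 y + t * Q2 y) \<le> (1 - t) * k x Q1 + t * k x Q2"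
    and max_ge: "\<And>Q. Q \<in> D \<Longrightarrow> \<exists>x. v \<le> k x Q"
  shows "\<exists>P. is_pd P \<and> (\<forall>Q\<in>D. v \<le> (\<Sum>x\<in>UNIV. P x * k x Q))"
proof -
  define S :: "(real^'x) set" where "S = {z. \<exists>Q\<in>D. \<exists>e>0. \<forall>x. k x Q - v + e \<le> z$x}"
  have "convex S"
    unfolding S_def using mixture convex
    by (intro convex_strictly_dominating_set[where k="\<lambda>x Q. k x Q - v"]) (auto simp: algebra_simps)
  moreover have "0 \<notin> S"
  proof
    assume "0 \<in> S"
    then obtain Q e where "Q \<in> D" "e > 0" "\<And>x. k x Q - v + e \<le> 0" unfolding S_def by auto
    with max_ge show False by (smt (verit))
  qed
  moreover obtain Q0 where "Q0 \<in> D" using assms(1) by blast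
  then have "(\<chi> x. k x Q0 - v + 1) \<in> S"
    unfolding S_def by (intro CollectI bexI[of _ Q0] exI[of _ 1]) auto
  then have "S \<noteq> {}" by blast
  moreover have "z + d \<in> S" if "z \<in> S" "\<forall>i. 0 \<le> d$i" for z d
    using that unfolding S_def by (fastforce intro: add_increasing2)
  ultimately obtain P where P: "is_pd P" and nonneg: "\<And>z. z \<in> S \<Longrightarrow> 0 \<le> (\<Sum>x\<in>UNIV. P x * z$x)"
    using exists_pd_nonneg_on_upward_closed by blast
  have "v \<le> (\<Sum>x\<in>UNIV. P x * k x Q)" if "Q \<in> D" for Q
  proof (rule field_le_epsilon)
    fix e :: real assume "0 < e"
    then have "(\<chi> x. k x Q - v + e) \<in> S" unfolding S_def using that by auto
    then have "0 \<le> (\<Sum>x\<in>UNIV. P x * (k x Q - v + e))" using nonneg by fastforce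
    also have "\<dots> = (\<Sum>x\<in>UNIV. P x * k x Q) - v + e"
      using P unfolding is_pd_def
      by (simp add: algebra_simps sum.distrib sum_subtractf flip: sum_distrib_left)
    finally show "v \<le> (\<Sum>x\<in>UNIV. P x * k x Q) + e" by simp
  qed
  then show ?thesis using P by blast
qed

definition renyi_sum :: "real \<Rightarrow> ('a::finite \<Rightarrow> real) \<Rightarrow> ('a \<Rightarrow> real) \<Rightarrow> real" where
  "renyi_sum \<alpha> Q R = (\<Sum>y\<in>UNIV. Q y powr \<alpha> * R y powr (1 - \<alpha>))"

text \<open>The value \<open>\<infinity>\<close> at \<open>0\<close> follows \<open>renyi_div\<close>; HOL's \<open>ln 0 = 0\<close> would give \<open>0\<close> instead.\<close>

definition renyi_of_sum :: "real \<Rightarrow> real \<Rightarrow> ereal" where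
  "renyi_of_sum \<alpha> s = (if s = 0 then \<infinity> else ereal (ln s / (\<alpha> - 1)))"

lemma renyi_div_eq:
  assumes "\<And>y. 0 \<le> Q y"
  shows "renyi_div \<alpha> Q R = (if 1 < \<alpha> \<and> \<not> (\<forall>y. 0 < Q y \<longrightarrow> 0 < R y) then \<infinity>
    else renyi_of_sum \<alpha> (renyi_sum \<alpha> Q R))"
proof -
  have "(\<Sum>y\<in>{y. 0 < Q y}. Q y powr \<alpha> * R y powr (1 - \<alpha>)) = renyi_sum \<alpha> Q R"
    unfolding renyi_sum_def
    by (rule sum.mono_neutral_left) (use assms in \<open>auto simp: not_less order.antisym\<close>)
  then show ?thesis unfolding renyi_div_def renyi_of_sum_def Let_def by simp
qed

lemma renyi_sum_product:
  assumes "\<And>x. 0 \<le> P x" "\<And>y. 0 \<le> Q y" "\<And>x y. 0 \<le> W x y"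
  shows "renyi_sum \<alpha> (\<lambda>(x, y). P x * Q y) (\<lambda>(x, y). P x * W x y)
    = (\<Sum>x\<in>UNIV. P x * renyi_sum \<alpha> Q (W x))"
proof -
  have factor: "(P x * Q y) powr \<alpha> * (P x * W x y) powr (1 - \<alpha>)
    = P x * (Q y powr \<alpha> * W x y powr (1 - \<alpha>))" for x y
  proof (cases "P x = 0")
    case False
    then have "P x powr \<alpha> * P x powr (1 - \<alpha>) = P x"
      using assms(1)[of x] by (simp add: powr_add[symmetric])
    then show ?thesis using assms by (simp add: powr_mult algebra_simps)
  qed simp
  show ?thesis
    unfolding renyi_sum_def sum_distrib_left UNIV_Times_UNIV[symmetric] sum.cartesian_product
    by (rule sum.cong) (auto simp: factor)
qed

lemma renyi_div_product_eq:
  assumes "is_pd P" "is_pd Q" "\<And>x y. 0 \<le> W x y"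
  shows "renyi_div \<alpha> (\<lambda>(x, y). P x * Q y) (\<lambda>(x, y). P x * W x y) =
    (if 1 < \<alpha> \<and> \<not> (\<forall>x y. 0 < P x \<longrightarrow> 0 < Q y \<longrightarrow> 0 < W x y) then \<infinity>
     else renyi_of_sum \<alpha> (\<Sum>x\<in>UNIV. P x * renyi_sum \<alpha> Q (W x)))"
proof -
  have P: "\<And>x. 0 \<le> P x" and Q: "\<And>y. 0 \<le> Q y" using assms unfolding is_pd_def by auto
  have nonneg: "0 \<le> (case p of (x, y) \<Rightarrow> P x * Q y)" for p
    using P Q by (auto split: prod.split)
  have support: "(\<forall>p. 0 < (case p of (x, y) \<Rightarrow> P x * Q y) \<longrightarrow> 0 < (case p of (x, y) \<Rightarrow> P x * W x y))
    \<longleftrightarrow> (\<forall>x y. 0 < P x \<longrightarrow> 0 < Q y \<longrightarrow> 0 < W x y)"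
    using P Q by (auto simp: zero_less_mult_iff) (metis less_eq_real_def not_less)+
  show ?thesis
    unfolding renyi_div_eq[OF nonneg] support renyi_sum_product[OF P Q assms(3)] ..
qed

lemma renyi_of_sum_antimono:
  assumes "\<alpha> < 1" "0 \<le> s" "s \<le> t"
  shows "renyi_of_sum \<alpha> t \<le> renyi_of_sum \<alpha> s"
proof (cases "s = 0")
  case False
  then have "ln s \<le> ln t" using assms by simp
  then have "ln t / (\<alpha> - 1) \<le> ln s / (\<alpha> - 1)" using assms(1) by (simp add: divide_right_mono_neg)
  then show ?thesis unfolding renyi_of_sum_def using False assms by simp
qed (simp add: renyi_of_sum_def)

lemma renyi_of_sum_mono:
  assumes "1 < \<alpha>" "0 < s" "s \<le> t"
  shows "renyi_of_sum \<alpha> s \<le> renyi_of_sum \<alpha> t"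
  using assms by (simp add: renyi_of_sum_def divide_right_mono)

lemma exists_le_pd_average:
  fixes f :: "'a::finite \<Rightarrow> real"
  assumes "is_pd P"
  shows "\<exists>x. f x \<le> (\<Sum>x\<in>UNIV. P x * f x)"
proof -
  obtain x0 where "f x0 = Min (range f)" using Min_in[of "range f"] by fastforce
  then have "(\<Sum>x\<in>UNIV. P x * f x0) \<le> (\<Sum>x\<in>UNIV. P x * f x)"
    using assms unfolding is_pd_def by (intro sum_mono mult_left_mono) auto
  then show ?thesis using assms unfolding is_pd_def by (auto simp flip: sum_distrib_right)
qed

lemma exists_ge_pd_average:
  fixes f :: "'a::finite \<Rightarrow> real"
  assumes "is_pd P"
  shows "\<exists>x. (\<Sum>x\<in>UNIV. P x * f x) \<le> f x"
  using exists_le_pd_average[OF assms, of "\<lambda>x. - f x"] by (auto simp: sum_negf)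

lemma renyi_sum_nonneg: "0 \<le> renyi_sum \<alpha> Q R"
  unfolding renyi_sum_def by (simp add: sum_nonneg)

lemma renyi_sum_pos:
  assumes "is_pd Q" "\<And>y. 0 < Q y \<Longrightarrow> 0 < R y"
  shows "0 < renyi_sum \<alpha> Q R"
proof -
  obtain y where "Q y \<noteq> 0" using assms(1) unfolding is_pd_def by (metis sum.neutral zero_neq_one)
  then have "0 < Q y" using assms(1) unfolding is_pd_def by (simp add: order_less_le)
  moreover have "0 < R y" using assms(2) \<open>0 < Q y\<close> .
  ultimately have "0 < Q y powr \<alpha> * R y powr (1 - \<alpha>)" by simp
  also have "\<dots> \<le> renyi_sum \<alpha> Q R" unfolding renyi_sum_def by (rule member_le_sum) auto
  finally show ?thesis .
qed

lemma channel_nonneg: "is_channel W \<Longrightarrow> 0 \<le> W x y"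
  unfolding is_channel_def is_pd_def by blast

lemma le_Max_renyi_div:
  fixes W :: "'x::finite \<Rightarrow> 'y::finite \<Rightarrow> real"
  shows "renyi_div \<alpha> Q (W x) \<le> (MAX x\<in>UNIV. renyi_div \<alpha> Q (W x))"
  by (rule Max_ge) auto

lemma renyi_div_product_le_Max:
  fixes W :: "'x::finite \<Rightarrow> 'y::finite \<Rightarrow> real"
  assumes W: "is_channel W" and "is_pd P" "is_pd Q" "\<alpha> \<noteq> 1"
  shows "renyi_div \<alpha> (\<lambda>(x, y). P x * Q y) (\<lambda>(x, y). P x * W x y)
    \<le> (MAX x\<in>UNIV. renyi_div \<alpha> Q (W x))"
proof -
  have Q: "\<And>y. 0 \<le> Q y" using assms(3) unfolding is_pd_def by auto
  let ?avg = "\<Sum>x\<in>UNIV. P x * renyi_sum \<alpha> Q (W x)"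
  consider "\<alpha> < 1" | "1 < \<alpha>" "\<exists>x y. 0 < Q y \<and> \<not> 0 < W x y" | "1 < \<alpha>" "\<forall>x y. 0 < Q y \<longrightarrow> 0 < W x y"
    using assms(4) by fastforce
  then show ?thesis
  proof cases
    case 1
    obtain x where x: "renyi_sum \<alpha> Q (W x) \<le> ?avg"
      using exists_le_pd_average[OF assms(2), of "\<lambda>x. renyi_sum \<alpha> Q (W x)"] by blast
    have "renyi_div \<alpha> (\<lambda>(x, y). P x * Q y) (\<lambda>(x, y). P x * W x y) = renyi_of_sum \<alpha> ?avg"
      using renyi_div_product_eq[of P Q W, OF assms(2,3) channel_nonneg[OF W]] 1 by simp
    also have "\<dots> \<le> renyi_of_sum \<alpha> (renyi_sum \<alpha> Q (W x))"
      by (rule renyi_of_sum_antimono[OF 1 renyi_sum_nonneg x])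
    also have "\<dots> = renyi_div \<alpha> Q (W x)" using renyi_div_eq[of Q, OF Q] 1 by simp
    finally show ?thesis using le_Max_renyi_div order_trans by blast
  next
    case 2
    then obtain x y where "0 < Q y" "\<not> 0 < W x y" by blast
    then have "renyi_div \<alpha> Q (W x) = \<infinity>" using renyi_div_eq[of Q, OF Q] 2 by auto
    then show ?thesis using le_Max_renyi_div[of \<alpha> Q W x] by simp
  next
    case 3
    obtain x where x: "?avg \<le> renyi_sum \<alpha> Q (W x)"
      using exists_ge_pd_average[OF assms(2), of "\<lambda>x. renyi_sum \<alpha> Q (W x)"] by blast
    obtain x' where "renyi_sum \<alpha> Q (W x') \<le> ?avg"
      using exists_le_pd_average[OF assms(2), of "\<lambda>x. renyi_sum \<alpha> Q (W x)"] by blast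
    then have "0 < ?avg" using renyi_sum_pos[OF assms(3)] 3 by (meson less_le_trans)
    have "renyi_div \<alpha> (\<lambda>(x, y). P x * Q y) (\<lambda>(x, y). P x * W x y) = renyi_of_sum \<alpha> ?avg"
      using renyi_div_product_eq[of P Q W, OF assms(2,3) channel_nonneg[OF W]] 3 by simp
    also have "\<dots> \<le> renyi_of_sum \<alpha> (renyi_sum \<alpha> Q (W x))"
      using 3(1) \<open>0 < ?avg\<close> x by (rule renyi_of_sum_mono)
    also have "\<dots> = renyi_div \<alpha> Q (W x)" using renyi_div_eq[of Q, OF Q] 3 by auto
    finally show ?thesis using le_Max_renyi_div order_trans by blast
  qed
qed

lemma umlaut_info_le_Max_renyi_div:
  fixes W :: "'x::finite \<Rightarrow> 'y::finite \<Rightarrow> real"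
  assumes "is_channel W" "is_pd Q" "\<alpha> \<noteq> 1"
  shows "umlaut_info \<alpha> W \<le> (MAX x\<in>UNIV. renyi_div \<alpha> Q (W x))"
  unfolding umlaut_info_def
  using assms renyi_div_product_le_Max by (fastforce intro!: SUP_least INF_lower2)

definition pd_on :: "'a set \<Rightarrow> ('a::finite \<Rightarrow> real) set" where
  "pd_on B = {Q. is_pd Q \<and> (\<forall>y. y \<notin> B \<longrightarrow> Q y = 0)}"

lemma is_pd_uniform: "is_pd (\<lambda>_::'a::finite. 1 / real CARD('a))"
  by (simp add: is_pd_def)

lemma uniform_in_pd_on:
  assumes "B \<noteq> {}"
  shows "(\<lambda>y. if y \<in> B then 1 / real (card B) else 0) \<in> pd_on B"
  using assms by (simp add: pd_on_def is_pd_def sum.If_cases)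

lemma is_pd_mixture:
  assumes "is_pd P" "is_pd Q" "0 \<le> t" "t \<le> 1"
  shows "is_pd (\<lambda>y. (1 - t) * P y + t * Q y)"
  using assms unfolding is_pd_def by (simp add: sum.distrib flip: sum_distrib_left)

lemma pd_on_mixture:
  assumes "P \<in> pd_on B" "Q \<in> pd_on B" "0 \<le> t" "t \<le> 1"
  shows "(\<lambda>y. (1 - t) * P y + t * Q y) \<in> pd_on B"
  using assms is_pd_mixture unfolding pd_on_def by auto

lemma renyi_sum_mixture_le:
  assumes "1 \<le> \<alpha>" "\<And>y. 0 \<le> Q1 y" "\<And>y. 0 \<le> Q2 y" "0 \<le> t" "t \<le> 1"
  shows "renyi_sum \<alpha> (\<lambda>y. (1 - t) * Q1 y + t * Q2 y) R
    \<le> (1 - t) * renyi_sum \<alpha> Q1 R + t * renyi_sum \<alpha> Q2 R"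
proof -
  have "((1 - t) * Q1 y + t * Q2 y) powr \<alpha> * R y powr (1 - \<alpha>)
    \<le> ((1 - t) * Q1 y powr \<alpha> + t * Q2 y powr \<alpha>) * R y powr (1 - \<alpha>)" for y
    using convex_onD[OF convex_on_powr_nonneg[OF assms(1)], of t "Q1 y" "Q2 y"] assms
    by (intro mult_right_mono) auto
  then show ?thesis
    unfolding renyi_sum_def sum_distrib_left sum.distrib[symmetric]
    by (intro sum_mono) (simp add: algebra_simps)
qed

lemma renyi_sum_mixture_ge:
  assumes "0 < \<alpha>" "\<alpha> \<le> 1" "\<And>y. 0 \<le> Q1 y" "\<And>y. 0 \<le> Q2 y" "0 \<le> t" "t \<le> 1"
  shows "(1 - t) * renyi_sum \<alpha> Q1 R + t * renyi_sum \<alpha> Q2 R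
    \<le> renyi_sum \<alpha> (\<lambda>y. (1 - t) * Q1 y + t * Q2 y) R"
proof -
  have "((1 - t) * Q1 y powr \<alpha> + t * Q2 y powr \<alpha>) * R y powr (1 - \<alpha>)
    \<le> ((1 - t) * Q1 y + t * Q2 y) powr \<alpha> * R y powr (1 - \<alpha>)" for y
    using concave_onD[OF concave_on_powr_nonneg[OF assms(1,2)], of t "Q1 y" "Q2 y"] assms
    by (intro mult_right_mono) auto
  then show ?thesis
    unfolding renyi_sum_def sum_distrib_left sum.distrib[symmetric]
    by (intro sum_mono) (simp add: algebra_simps)
qed

lemma continuous_on_Max:
  fixes f :: "'a \<Rightarrow> 'b::topological_space \<Rightarrow> real"
  assumes "finite A" "A \<noteq> {}" "\<And>x. x \<in> A \<Longrightarrow> continuous_on S (f x)"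
  shows "continuous_on S (\<lambda>q. MAX x\<in>A. f x q)"
  using assms
proof (induction A rule: finite_ne_induct)
  case (insert x F)
  then have "continuous_on S (\<lambda>q. max (f x q) (MAX x\<in>F. f x q))"
    by (intro continuous_on_max) auto
  then show ?case using insert by simp
qed simp

lemma continuous_on_Min:
  fixes f :: "'a \<Rightarrow> 'b::topological_space \<Rightarrow> real"
  assumes "finite A" "A \<noteq> {}" "\<And>x. x \<in> A \<Longrightarrow> continuous_on S (f x)"
  shows "continuous_on S (\<lambda>q. MIN x\<in>A. f x q)"
  using assms
proof (induction A rule: finite_ne_induct)
  case (insert x F)
  then have "continuous_on S (\<lambda>q. min (f x q) (MIN x\<in>F. f x q))"
    by (intro continuous_on_min) auto
  then show ?case using insert by simp
qed simp

lemma continuous_on_renyi_sum: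
  assumes "0 < \<alpha>"
  shows "continuous_on {q::real^'a::finite. \<forall>y. 0 \<le> q$y} (\<lambda>q. renyi_sum \<alpha> (vec_nth q) R)"
  unfolding renyi_sum_def using assms
  by (intro continuous_intros continuous_on_powr' continuous_on_component continuous_on_id) auto

text \<open>Distributions are handled as vectors in \<open>real^'a\<close>, where closed bounded sets are compact.\<close>

lemma compact_pd_on: "compact {q::real^'a::finite. vec_nth q \<in> pd_on B}"
proof -
  have "{q::real^'a. vec_nth q \<in> pd_on B}
    = {q. \<forall>y. 0 \<le> q$y} \<inter> {q. (\<Sum>y\<in>UNIV. q$y) = 1} \<inter> (\<Inter>y\<in>-B. {q. q$y = 0})"
    by (auto simp: pd_on_def is_pd_def)
  moreover have "closed ({q::real^'a. \<forall>y. 0 \<le> q$y} \<inter> {q. (\<Sum>y\<in>UNIV. q$y) = 1}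
      \<inter> (\<Inter>y\<in>-B. {q. q$y = 0}))"
    by (intro closed_Int closed_INT ballI closed_Collect_all closed_Collect_le closed_Collect_eq
        continuous_on_const continuous_on_component continuous_on_id continuous_on_sum)
  ultimately have "closed {q::real^'a. vec_nth q \<in> pd_on B}" by simp
  moreover have "{q::real^'a. vec_nth q \<in> pd_on B} \<subseteq> cbox 0 (\<chi> y. 1)"
  proof
    fix q :: "real^'a" assume "q \<in> {q. vec_nth q \<in> pd_on B}"
    then have "\<And>y. 0 \<le> q$y" "(\<Sum>y\<in>UNIV. q$y) = 1" by (auto simp: pd_on_def is_pd_def)
    moreover from this have "q$y \<le> 1" for y by (metis member_le_sum finite UNIV_I)
    ultimately show "q \<in> cbox 0 (\<chi> y. 1)" by (simp add: mem_box_cart)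
  qed
  ultimately show ?thesis using bounded_cbox bounded_subset compact_eq_bounded_closed by blast
qed

lemma pd_on_attains_min:
  fixes g :: "('a::finite \<Rightarrow> real) \<Rightarrow> real"
  assumes "pd_on B \<noteq> {}" "continuous_on {q::real^'a. \<forall>y. 0 \<le> q$y} (\<lambda>q. g (vec_nth q))"
  shows "\<exists>Q\<in>pd_on B. \<forall>Q'\<in>pd_on B. g Q \<le> g Q'"
proof -
  let ?K = "{q::real^'a. vec_nth q \<in> pd_on B}"
  have "vec_nth (vec_lambda Q) = Q" for Q :: "'a \<Rightarrow> real" by (simp add: fun_eq_iff)
  then have "?K \<noteq> {}" using assms(1) by (metis (mono_tags) empty_Collect_eq ex_in_conv)
  moreover have "continuous_on ?K (\<lambda>q. g (vec_nth q))"
    by (rule continuous_on_subset[OF assms(2)]) (auto simp: pd_on_def is_pd_def)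
  ultimately obtain q where "q \<in> ?K" "\<And>q'. q' \<in> ?K \<Longrightarrow> g (vec_nth q) \<le> g (vec_nth q')"
    using continuous_attains_inf[OF compact_pd_on] by metis
  then show ?thesis by (metis mem_Collect_eq \<open>\<And>Q. vec_nth (vec_lambda Q) = Q\<close>)
qed

lemma renyi_of_sum_le_umlaut_info_lt1:
  fixes W :: "'x::finite \<Rightarrow> 'y::finite \<Rightarrow> real"
  assumes W: "is_channel W" and "\<alpha> < 1" "is_pd P"
    and below: "\<And>Q. is_pd Q \<Longrightarrow> (\<Sum>x\<in>UNIV. P x * renyi_sum \<alpha> Q (W x)) \<le> w"
  shows "renyi_of_sum \<alpha> w \<le> umlaut_info \<alpha> W"
proof -
  have "renyi_of_sum \<alpha> w \<le> renyi_div \<alpha> (\<lambda>(x, y). P x * Q y) (\<lambda>(x, y). P x * W x y)"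
    if "is_pd Q" for Q
  proof -
    have average_nonneg: "0 \<le> (\<Sum>x\<in>UNIV. P x * renyi_sum \<alpha> Q (W x))"
      using assms(3) renyi_sum_nonneg unfolding is_pd_def
      by (intro sum_nonneg mult_nonneg_nonneg) auto
    have "renyi_of_sum \<alpha> w \<le> renyi_of_sum \<alpha> (\<Sum>x\<in>UNIV. P x * renyi_sum \<alpha> Q (W x))"
      by (rule renyi_of_sum_antimono[OF assms(2) average_nonneg below[OF that]])
    then show ?thesis
      using renyi_div_product_eq[of P Q W, OF assms(3) that channel_nonneg[OF W]] assms(2) by simp
  qed
  then show ?thesis
    unfolding umlaut_info_def using assms(3) by (auto intro!: SUP_upper2 INF_greatest)
qed

lemma Max_renyi_div_le_lt1:
  fixes W :: "'x::finite \<Rightarrow> 'y::finite \<Rightarrow> real"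
  assumes "\<alpha> < 1" "is_pd Q"
  shows "(MAX x\<in>UNIV. renyi_div \<alpha> Q (W x)) \<le> renyi_of_sum \<alpha> (MIN x\<in>UNIV. renyi_sum \<alpha> Q (W x))"
proof -
  have Q: "\<And>y. 0 \<le> Q y" using assms(2) unfolding is_pd_def by auto
  have "renyi_div \<alpha> Q (W x) \<le> renyi_of_sum \<alpha> (MIN x\<in>UNIV. renyi_sum \<alpha> Q (W x))" for x
  proof -
    have "renyi_div \<alpha> Q (W x) = renyi_of_sum \<alpha> (renyi_sum \<alpha> Q (W x))"
      using renyi_div_eq[of Q, OF Q] assms(1) by simp
    also have "\<dots> \<le> renyi_of_sum \<alpha> (MIN x\<in>UNIV. renyi_sum \<alpha> Q (W x))"
      using assms(1) by (rule renyi_of_sum_antimono) (simp_all add: renyi_sum_nonneg)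
    finally show ?thesis .
  qed
  then show ?thesis by simp
qed

lemma exists_pd_average_renyi_sum_le:
  fixes W :: "'x::finite \<Rightarrow> 'y::finite \<Rightarrow> real"
  assumes "0 < \<alpha>" "\<alpha> \<le> 1" and min_le: "\<And>Q. is_pd Q \<Longrightarrow> (MIN x\<in>UNIV. renyi_sum \<alpha> Q (W x)) \<le> w"
  shows "\<exists>P. is_pd P \<and> (\<forall>Q. is_pd Q \<longrightarrow> (\<Sum>x\<in>UNIV. P x * renyi_sum \<alpha> Q (W x)) \<le> w)"
proof -
  have "\<exists>P. is_pd P \<and> (\<forall>Q\<in>{Q. is_pd Q}. - w \<le> (\<Sum>x\<in>UNIV. P x * - renyi_sum \<alpha> Q (W x)))"
  proof (rule exists_mixture_ge_of_max_ge)
    show "{Q. is_pd Q} \<noteq> {}" using is_pd_uniform by blast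
    show "\<exists>x. - w \<le> - renyi_sum \<alpha> Q (W x)" if "Q \<in> {Q. is_pd Q}" for Q
      using Min_in[of "range (\<lambda>x. renyi_sum \<alpha> Q (W x))"] min_le that by fastforce
  next
    fix Q1 Q2 :: "'y \<Rightarrow> real" and t :: real
    assume "Q1 \<in> {Q. is_pd Q}" "Q2 \<in> {Q. is_pd Q}" "0 \<le> t" "t \<le> 1"
    then show "(\<lambda>y. (1 - t) * Q1 y + t * Q2 y) \<in> {Q. is_pd Q}"
      and "- renyi_sum \<alpha> (\<lambda>y. (1 - t) * Q1 y + t * Q2 y) (W x)
        \<le> (1 - t) * - renyi_sum \<alpha> Q1 (W x) + t * - renyi_sum \<alpha> Q2 (W x)" for x
      using is_pd_mixture renyi_sum_mixture_ge[OF assms(1,2), of Q1 Q2 t "W x"]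
      by (auto simp: is_pd_def)
  qed
  then show ?thesis by (simp add: sum_negf)
qed

lemma exists_Max_renyi_div_le_umlaut_info_lt1:
  fixes W :: "'x::finite \<Rightarrow> 'y::finite \<Rightarrow> real"
  assumes W: "is_channel W" and "0 < \<alpha>" "\<alpha> < 1"
  shows "\<exists>Q. is_pd Q \<and> (MAX x\<in>UNIV. renyi_div \<alpha> Q (W x)) \<le> umlaut_info \<alpha> W"
proof -
  have "continuous_on {q::real^'y. \<forall>y. 0 \<le> q$y} (\<lambda>q. - (MIN x\<in>UNIV. renyi_sum \<alpha> (vec_nth q) (W x)))"
    by (intro continuous_on_minus continuous_on_Min continuous_on_renyi_sum assms(2)) simp_all
  then have "\<exists>Q\<in>pd_on UNIV. \<forall>Q'\<in>pd_on UNIV.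
      - (MIN x\<in>UNIV. renyi_sum \<alpha> Q (W x)) \<le> - (MIN x\<in>UNIV. renyi_sum \<alpha> Q' (W x))"
    using uniform_in_pd_on[of UNIV] by (intro pd_on_attains_min) auto
  then obtain Qs where Qs_in: "Qs \<in> pd_on UNIV" and minimal: "\<forall>Q\<in>pd_on UNIV.
      - (MIN x\<in>UNIV. renyi_sum \<alpha> Qs (W x)) \<le> - (MIN x\<in>UNIV. renyi_sum \<alpha> Q (W x))" ..
  from Qs_in have Qs: "is_pd Qs" by (simp add: pd_on_def)
  have optimal: "(MIN x\<in>UNIV. renyi_sum \<alpha> Q (W x)) \<le> (MIN x\<in>UNIV. renyi_sum \<alpha> Qs (W x))"
    if "is_pd Q" for Q
  proof -
    have "Q \<in> pd_on UNIV" using that by (simp add: pd_on_def)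
    with minimal
    have "- (MIN x\<in>UNIV. renyi_sum \<alpha> Qs (W x)) \<le> - (MIN x\<in>UNIV. renyi_sum \<alpha> Q (W x))" ..
    then show ?thesis by (simp only: neg_le_iff_le)
  qed
  obtain P where "is_pd P"
    "\<And>Q. is_pd Q \<Longrightarrow> (\<Sum>x\<in>UNIV. P x * renyi_sum \<alpha> Q (W x)) \<le> (MIN x\<in>UNIV. renyi_sum \<alpha> Qs (W x))"
    using exists_pd_average_renyi_sum_le[OF assms(2) less_imp_le[OF assms(3)] optimal] by blast
  then have "renyi_of_sum \<alpha> (MIN x\<in>UNIV. renyi_sum \<alpha> Qs (W x)) \<le> umlaut_info \<alpha> W"
    by (rule renyi_of_sum_le_umlaut_info_lt1[OF W assms(3)])
  then show ?thesis
    using Qs Max_renyi_div_le_lt1[OF assms(3) Qs, of W] by (blast intro: order_trans)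
qed

text \<open>\<open>P\<close> may vanish on some inputs. Mixing in a little of the uniform distribution gives every
  \<open>Q\<close> charging an output unreachable from some input infinite divergence, at a cost of \<open>e\<close>
  for the others.\<close>

lemma renyi_of_sum_le_umlaut_info_gt1:
  fixes W :: "'x::finite \<Rightarrow> 'y::finite \<Rightarrow> real"
  assumes W: "is_channel W" and "1 < \<alpha>" "is_pd P" "0 < v"
    and above: "\<And>Q. Q \<in> pd_on {y. \<forall>x. 0 < W x y} \<Longrightarrow> v \<le> (\<Sum>x\<in>UNIV. P x * renyi_sum \<alpha> Q (W x))"
  shows "renyi_of_sum \<alpha> v \<le> umlaut_info \<alpha> W"
proof (rule ereal_le_epsilon2)
  fix e :: real assume "0 < e"
  define u where "u = exp (- e * (\<alpha> - 1))"
  have "0 < u" "u < 1" unfolding u_def using \<open>0 < e\<close> assms(2) by auto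
  define Pe where "Pe x = (1 - u) * (1 / real CARD('x)) + u * P x" for x
  have Pe: "is_pd Pe"
    unfolding Pe_def using is_pd_mixture[OF is_pd_uniform assms(3)] \<open>0 < u\<close> \<open>u < 1\<close> by simp
  have Pe_pos: "0 < Pe x" for x
    unfolding Pe_def using \<open>0 < u\<close> \<open>u < 1\<close> assms(3) unfolding is_pd_def
    by (intro add_pos_nonneg) auto
  have "renyi_of_sum \<alpha> (u * v) \<le> renyi_div \<alpha> (\<lambda>(x, y). Pe x * Q y) (\<lambda>(x, y). Pe x * W x y)"
    if Q: "is_pd Q" for Q
  proof (cases "Q \<in> pd_on {y. \<forall>x. 0 < W x y}")
    case False
    then obtain x y where "Q y \<noteq> 0" "\<not> 0 < W x y" using Q unfolding pd_on_def by auto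
    moreover from this have "0 < Q y" using Q unfolding is_pd_def by (simp add: order_less_le)
    ultimately show ?thesis
      using renyi_div_product_eq[of Pe Q W, OF Pe Q channel_nonneg[OF W]] Pe_pos[of x] assms(2)
      by auto
  next
    case True
    have "(\<Sum>x\<in>UNIV. Pe x * renyi_sum \<alpha> Q (W x))
      = (1 - u) * (\<Sum>x\<in>UNIV. renyi_sum \<alpha> Q (W x) / real CARD('x))
        + u * (\<Sum>x\<in>UNIV. P x * renyi_sum \<alpha> Q (W x))"
      unfolding Pe_def by (simp add: sum.distrib sum_distrib_left algebra_simps)
    moreover have "0 \<le> (1 - u) * (\<Sum>x\<in>UNIV. renyi_sum \<alpha> Q (W x) / real CARD('x))"
      using \<open>u < 1\<close>
      by (intro mult_nonneg_nonneg sum_nonneg divide_nonneg_nonneg renyi_sum_nonneg) auto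
    moreover have "u * v \<le> u * (\<Sum>x\<in>UNIV. P x * renyi_sum \<alpha> Q (W x))"
      using above[OF True] \<open>0 < u\<close> by simp
    ultimately have "u * v \<le> (\<Sum>x\<in>UNIV. Pe x * renyi_sum \<alpha> Q (W x))" by linarith
    then have "renyi_of_sum \<alpha> (u * v) \<le> renyi_of_sum \<alpha> (\<Sum>x\<in>UNIV. Pe x * renyi_sum \<alpha> Q (W x))"
      using assms(2,4) \<open>0 < u\<close> by (intro renyi_of_sum_mono) auto
    then show ?thesis
      using renyi_div_product_eq[of Pe Q W, OF Pe Q channel_nonneg[OF W]] True assms(2)
      by (auto simp: pd_on_def)
  qed
  then have "renyi_of_sum \<alpha> (u * v) \<le> umlaut_info \<alpha> W"
    unfolding umlaut_info_def using Pe by (auto intro!: SUP_upper2 INF_greatest)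
  moreover have "ln (u * v) / (\<alpha> - 1) = ln v / (\<alpha> - 1) - e"
    using \<open>0 < u\<close> assms(2,4) by (simp add: u_def ln_mult diff_divide_distrib)
  ultimately have "ereal (ln v / (\<alpha> - 1) - e) \<le> umlaut_info \<alpha> W"
    using \<open>0 < u\<close> assms(4) by (simp add: renyi_of_sum_def)
  then show "renyi_of_sum \<alpha> v \<le> umlaut_info \<alpha> W + ereal e"
    using assms(4) by (cases "umlaut_info \<alpha> W") (simp_all add: renyi_of_sum_def)
qed

lemma Max_renyi_div_le_gt1:
  fixes W :: "'x::finite \<Rightarrow> 'y::finite \<Rightarrow> real"
  assumes "1 < \<alpha>" "Q \<in> pd_on {y. \<forall>x. 0 < W x y}"
  shows "(MAX x\<in>UNIV. renyi_div \<alpha> Q (W x)) \<le> renyi_of_sum \<alpha> (MAX x\<in>UNIV. renyi_sum \<alpha> Q (W x))"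
proof -
  have Q: "is_pd Q" "\<And>y. 0 \<le> Q y" and support: "\<And>x y. 0 < Q y \<Longrightarrow> 0 < W x y"
    using assms(2) unfolding pd_on_def is_pd_def by auto
  have "renyi_div \<alpha> Q (W x) \<le> renyi_of_sum \<alpha> (MAX x\<in>UNIV. renyi_sum \<alpha> Q (W x))" for x
  proof -
    have "renyi_div \<alpha> Q (W x) = renyi_of_sum \<alpha> (renyi_sum \<alpha> Q (W x))"
      using renyi_div_eq[of Q, OF Q(2)] support by auto
    also have "\<dots> \<le> renyi_of_sum \<alpha> (MAX x\<in>UNIV. renyi_sum \<alpha> Q (W x))"
    proof (rule renyi_of_sum_mono[OF assms(1)])
      show "0 < renyi_sum \<alpha> Q (W x)" using Q(1) support by (rule renyi_sum_pos)
      show "renyi_sum \<alpha> Q (W x) \<le> (MAX x\<in>UNIV. renyi_sum \<alpha> Q (W x))" by (rule Max_ge) auto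
    qed
    finally show ?thesis .
  qed
  then show ?thesis by simp
qed

lemma exists_pd_average_renyi_sum_ge:
  fixes W :: "'x::finite \<Rightarrow> 'y::finite \<Rightarrow> real"
  assumes "1 \<le> \<alpha>" "pd_on B \<noteq> {}"
    and le_max: "\<And>Q. Q \<in> pd_on B \<Longrightarrow> v \<le> (MAX x\<in>UNIV. renyi_sum \<alpha> Q (W x))"
  shows "\<exists>P. is_pd P \<and> (\<forall>Q\<in>pd_on B. v \<le> (\<Sum>x\<in>UNIV. P x * renyi_sum \<alpha> Q (W x)))"
proof (rule exists_mixture_ge_of_max_ge[OF assms(2)])
  show "\<exists>x. v \<le> renyi_sum \<alpha> Q (W x)" if "Q \<in> pd_on B" for Q
    using Max_in[of "range (\<lambda>x. renyi_sum \<alpha> Q (W x))"] le_max[OF that] by fastforce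
next
  fix Q1 Q2 :: "'y \<Rightarrow> real" and t :: real
  assume "Q1 \<in> pd_on B" "Q2 \<in> pd_on B" "0 \<le> t" "t \<le> 1"
  then show "(\<lambda>y. (1 - t) * Q1 y + t * Q2 y) \<in> pd_on B"
    and "renyi_sum \<alpha> (\<lambda>y. (1 - t) * Q1 y + t * Q2 y) (W x)
      \<le> (1 - t) * renyi_sum \<alpha> Q1 (W x) + t * renyi_sum \<alpha> Q2 (W x)" for x
    using pd_on_mixture renyi_sum_mixture_le[OF assms(1), of Q1 Q2 t "W x"]
    by (auto simp: pd_on_def is_pd_def)
qed

text \<open>If every output is unreachable from some input, a full-support input distribution has
  infinite divergence against every \<open>Q\<close>.\<close>

lemma umlaut_info_eq_infinity:
  fixes W :: "'x::finite \<Rightarrow> 'y::finite \<Rightarrow> real"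
  assumes W: "is_channel W" and "1 < \<alpha>" "pd_on {y. \<forall>x. 0 < W x y} = {}"
  shows "umlaut_info \<alpha> W = \<infinity>"
proof (rule ereal_top)
  fix r :: real
  have "ereal r = renyi_of_sum \<alpha> (exp (r * (\<alpha> - 1)))"
    using assms(2) by (simp add: renyi_of_sum_def)
  also have "\<dots> \<le> umlaut_info \<alpha> W"
    using assms(3) by (intro renyi_of_sum_le_umlaut_info_gt1[OF W assms(2) is_pd_uniform]) auto
  finally show "ereal r \<le> umlaut_info \<alpha> W" .
qed

lemma exists_Max_renyi_div_le_umlaut_info_gt1:
  fixes W :: "'x::finite \<Rightarrow> 'y::finite \<Rightarrow> real"
  assumes W: "is_channel W" and "1 < \<alpha>"
  shows "\<exists>Q. is_pd Q \<and> (MAX x\<in>UNIV. renyi_div \<alpha> Q (W x)) \<le> umlaut_info \<alpha> W"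
proof (cases "pd_on {y. \<forall>x. 0 < W x y} = {}")
  case True
  then show ?thesis using umlaut_info_eq_infinity[OF W assms(2)] is_pd_uniform by auto
next
  case False
  define A where "A = pd_on {y. \<forall>x. 0 < W x y}"
  have "continuous_on {q::real^'y. \<forall>y. 0 \<le> q$y} (\<lambda>q. MAX x\<in>UNIV. renyi_sum \<alpha> (vec_nth q) (W x))"
    using assms(2) by (intro continuous_on_Max continuous_on_renyi_sum) simp_all
  then have "\<exists>Q\<in>A. \<forall>Q'\<in>A. (MAX x\<in>UNIV. renyi_sum \<alpha> Q (W x)) \<le> (MAX x\<in>UNIV. renyi_sum \<alpha> Q' (W x))"
    unfolding A_def by (rule pd_on_attains_min[OF False])
  then obtain Qs where Qs: "Qs \<in> A" and optimal:
    "\<And>Q. Q \<in> A \<Longrightarrow> (MAX x\<in>UNIV. renyi_sum \<alpha> Qs (W x)) \<le> (MAX x\<in>UNIV. renyi_sum \<alpha> Q (W x))"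
    by blast
  obtain P where "is_pd P"
    "\<forall>Q\<in>A. (MAX x\<in>UNIV. renyi_sum \<alpha> Qs (W x)) \<le> (\<Sum>x\<in>UNIV. P x * renyi_sum \<alpha> Q (W x))"
    using exists_pd_average_renyi_sum_ge[OF less_imp_le[OF assms(2)] False optimal[unfolded A_def]]
    unfolding A_def by blast
  moreover have "0 < (MAX x\<in>UNIV. renyi_sum \<alpha> Qs (W x))"
  proof -
    have "is_pd Qs" "\<And>y. 0 < Qs y \<Longrightarrow> 0 < W undefined y"
      using Qs unfolding A_def pd_on_def by auto
    then have "0 < renyi_sum \<alpha> Qs (W undefined)" by (rule renyi_sum_pos)
    also have "\<dots> \<le> (MAX x\<in>UNIV. renyi_sum \<alpha> Qs (W x))" by (rule Max_ge) auto
    finally show ?thesis .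
  qed
  ultimately have "renyi_of_sum \<alpha> (MAX x\<in>UNIV. renyi_sum \<alpha> Qs (W x)) \<le> umlaut_info \<alpha> W"
    unfolding A_def by (intro renyi_of_sum_le_umlaut_info_gt1[OF W assms(2)]) auto
  then show ?thesis
    using Qs Max_renyi_div_le_gt1[OF assms(2), of Qs W] unfolding A_def pd_on_def
    by (blast intro: order_trans)
qed

theorem mainTheorem12:
  fixes W :: "'x::finite \<Rightarrow> 'y::finite \<Rightarrow> real" and \<alpha> :: real
  assumes "is_channel W"
    and "0 < \<alpha>" and "\<alpha> \<noteq> 1"
  shows "\<exists>Q. is_pd Q
          \<and> (MAX x\<in>UNIV. renyi_div \<alpha> Q (W x)) = umlaut_info \<alpha> W
          \<and> (\<forall>Q'. is_pd Q' \<longrightarrow> (MAX x\<in>UNIV. renyi_div \<alpha> Q (W x)) \<le> (MAX x\<in>UNIV. renyi_div \<alpha> Q' (W x)))"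
proof -
  obtain Q where Q: "is_pd Q" and upper: "(MAX x\<in>UNIV. renyi_div \<alpha> Q (W x)) \<le> umlaut_info \<alpha> W"
  proof (cases "\<alpha> < 1")
    case True
    then show ?thesis using exists_Max_renyi_div_le_umlaut_info_lt1 assms that by blast
  next
    case False
    then show ?thesis using exists_Max_renyi_div_le_umlaut_info_gt1 assms that by force
  qed
  have lower: "umlaut_info \<alpha> W \<le> (MAX x\<in>UNIV. renyi_div \<alpha> Q' (W x))" if "is_pd Q'" for Q'
    using umlaut_info_le_Max_renyi_div assms(1,3) that by blast
  have "(MAX x\<in>UNIV. renyi_div \<alpha> Q (W x)) = umlaut_info \<alpha> W"
    using upper lower[OF Q] by (rule antisym)
  then show ?thesis using Q lower by (intro exI[of _ Q]) (simp del: Max_le_iff)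
qed

end
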